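(* Let $d\ge2$ and $p,q\ge0$. Then $$\sum_{j=0}^{\min\{p,q\}}Q^{(d)}_{p-j,q-j}(z)=\frac{d}{p+q+d}\,Q^{(d+1)}_{pq}(z),$$ equivalently, $$Q^{(d)}_{p,q}(z)=\frac{d}{p+q+d}Q^{(d+1)}_{pq}(z)-\frac{d}{p+q+d-2}Q^{(d+1)}_{p-1,q-1}(z),$$ with the convention $Q_{a,b}=0$ if $a<0$ or $b<0$.
   Context: For $d\ge2$ and $p,q\ge0$, the complex Gegenbauer polynomial is the polynomial in $z,\overline z$ $$Q_{pq}^{(d)}(z)=\frac{p+q+d-1}{(d-1)!}\sum_{j=0}^{\min\{p,q\}}(-1)^j\frac{(d+p+q-j-2)!}{j!(p-j)!(q-j)!}z^{p-j}\overline{z}^{q-j}.$$ *)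

theory Defs
  imports "HOL-Analysis.Analysis"
begin

definition cgeg :: "nat \<Rightarrow> nat \<Rightarrow> nat \<Rightarrow> complex \<Rightarrow> complex" where
  "cgeg d p q z =
     of_nat (p + q + d - 1) / of_nat (fact (d - 1)) *
     (\<Sum>j = 0..min p q. (-1) ^ j * of_nat (fact (d + p + q - j - 2)) /
        (of_nat (fact j) * of_nat (fact (p - j)) * of_nat (fact (q - j))) *
        z ^ (p - j) * cnj z ^ (q - j))"

definition cgegi :: "nat \<Rightarrow> int \<Rightarrow> int \<Rightarrow> complex \<Rightarrow> complex" where
  "cgegi d a b z = (if a < 0 \<or> b < 0 then 0 else cgeg d (nat a) (nat b) z)"

end

theory Submission
  imports Defs
begin

text \<open>Write Q^(m+2)_pq = (p+q+m+1)/(m+1)! * S_m(p,q), where S_m(p,q) is the sum over j of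
  (-1)^j (m+p+q-j)! / (j! (p-j)! (q-j)!) * z^(p-j) * conj(z)^(q-j). Then
  R_pq := d/(p+q+d) * Q^(d+1)_pq equals S_(m+1)(p,q)/(m+1)! for d = m+2, so passing to dimension
  d+1 only shifts m. The factorial identity (n+k+2) n!/(k+1)! = (n+1)!/(k+1)! + n!/k!, applied
  termwise, gives Q^(d)_(p+1,q+1) = R_(p+1,q+1) - R_pq, while Q^(d)_pq = R_pq if p = 0 or q = 0.
  Summing along the diagonal telescopes.\<close>

definition cgeg_term :: "nat \<Rightarrow> nat \<Rightarrow> nat \<Rightarrow> complex \<Rightarrow> nat \<Rightarrow> complex" where
  "cgeg_term m p q z j = (-1) ^ j * fact (m + p + q - j) / (fact j * fact (p - j) * fact (q - j)) *
     z ^ (p - j) * cnj z ^ (q - j)"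

definition cgeg_sum :: "nat \<Rightarrow> nat \<Rightarrow> nat \<Rightarrow> complex \<Rightarrow> complex" where
  "cgeg_sum m p q z = (\<Sum>j = 0..min p q. cgeg_term m p q z j)"

lemma fact_quotient_split:
  "(of_nat (n + k + 2) :: 'a :: field_char_0) * (fact n / fact (Suc k))
     = fact (Suc n) / fact (Suc k) + fact n / fact k"
proof -
  have "(of_nat (n + k + 2) :: 'a) * fact n = fact (Suc n) + of_nat (Suc k) * fact n"
    by (simp add: algebra_simps)
  then show ?thesis
    by (simp add: field_simps del: of_nat_Suc)
qed

lemma cgeg_term_0:
  "of_nat (p + q + m + 1) * cgeg_term m p q z 0 = cgeg_term (Suc m) p q z 0"
proof -
  have "m + p + q + 1 = Suc (m + p + q)" by simp
  then show ?thesis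
    unfolding cgeg_term_def by (simp add: field_simps del: fact_Suc) (simp add: algebra_simps)
qed

lemma cgeg_term_Suc_Suc:
  assumes "j \<le> min p q"
  shows "of_nat (p + q + m + 3) * cgeg_term m (Suc p) (Suc q) z (Suc j)
           = cgeg_term (Suc m) (Suc p) (Suc q) z (Suc j) - cgeg_term (Suc m) p q z j"
proof -
  obtain a b where ab: "p = j + a" "q = j + b"
    using assms by (metis le_Suc_ex min.bounded_iff)
  define n where "n = m + j + a + b + 1"
  define K where "K = (-1) ^ j * z ^ a * cnj z ^ b / (fact a * fact b)"
  have idx: "m + Suc p + Suc q - Suc j = n" "Suc m + Suc p + Suc q - Suc j = Suc n"
    "Suc m + p + q - j = n" "Suc p - Suc j = a" "Suc q - Suc j = b" "p - j = a" "q - j = b"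
    "p + q + m + 3 = n + j + 2"
    using ab n_def by simp_all
  have terms: "cgeg_term m (Suc p) (Suc q) z (Suc j) = - (fact n / fact (Suc j) * K)"
    "cgeg_term (Suc m) (Suc p) (Suc q) z (Suc j) = - (fact (Suc n) / fact (Suc j) * K)"
    "cgeg_term (Suc m) p q z j = fact n / fact j * K"
    unfolding cgeg_term_def idx K_def by (simp_all add: field_simps del: fact_Suc)
  have "of_nat (p + q + m + 3) * cgeg_term m (Suc p) (Suc q) z (Suc j)
      = - (of_nat (n + j + 2) * (fact n / fact (Suc j)) * K)"
    unfolding terms(1) idx(8) by (simp only: mult_minus_right mult.assoc)
  also have "\<dots> = - ((fact (Suc n) / fact (Suc j) + fact n / fact j) * K)"
    unfolding fact_quotient_split ..
  also have "\<dots> = cgeg_term (Suc m) (Suc p) (Suc q) z (Suc j) - cgeg_term (Suc m) p q z j"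
    unfolding terms(2,3) by (simp only: distrib_right minus_add_distrib mult_minus_left diff_conv_add_uminus)
  finally show ?thesis .
qed

lemma cgeg_sum_boundary:
  assumes "p = 0 \<or> q = 0"
  shows "of_nat (p + q + m + 1) * cgeg_sum m p q z = cgeg_sum (Suc m) p q z"
  using assms cgeg_term_0[of p q m z] by (auto simp: cgeg_sum_def)

lemma cgeg_sum_Suc_Suc:
  "of_nat (p + q + m + 3) * cgeg_sum m (Suc p) (Suc q) z
     = cgeg_sum (Suc m) (Suc p) (Suc q) z - cgeg_sum (Suc m) p q z"
proof -
  let ?c = "of_nat (p + q + m + 3) :: complex"
  have "Suc p + Suc q + m + 1 = p + q + m + 3" by simp
  then have head: "?c * cgeg_term m (Suc p) (Suc q) z 0 = cgeg_term (Suc m) (Suc p) (Suc q) z 0"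
    using cgeg_term_0[of "Suc p" "Suc q" m z] by (simp only:)
  have "?c * cgeg_sum m (Suc p) (Suc q) z
      = ?c * cgeg_term m (Suc p) (Suc q) z 0
        + (\<Sum>j = 0..min p q. ?c * cgeg_term m (Suc p) (Suc q) z (Suc j))"
    unfolding cgeg_sum_def min_Suc_Suc sum.atLeast0_atMost_Suc_shift
    by (simp add: distrib_left sum_distrib_left)
  also have "\<dots> = cgeg_term (Suc m) (Suc p) (Suc q) z 0
        + (\<Sum>j = 0..min p q. cgeg_term (Suc m) (Suc p) (Suc q) z (Suc j) - cgeg_term (Suc m) p q z j)"
    using head cgeg_term_Suc_Suc[of _ p q m z] by simp
  also have "\<dots> = cgeg_sum (Suc m) (Suc p) (Suc q) z - cgeg_sum (Suc m) p q z"
    unfolding cgeg_sum_def min_Suc_Suc sum.atLeast0_atMost_Suc_shift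
    by (simp add: sum_subtractf)
  finally show ?thesis .
qed

lemma cgeg_eq_cgeg_sum:
  "cgeg (m + 2) p q z = of_nat (p + q + m + 1) / fact (m + 1) * cgeg_sum m p q z"
proof -
  have "p + q + (m + 2) - 1 = p + q + m + 1" "m + 2 - 1 = m + 1"
    "\<And>j. m + 2 + p + q - j - 2 = m + p + q - j" by simp_all
  then show ?thesis
    unfolding cgeg_def cgeg_sum_def cgeg_term_def of_nat_fact by (simp only:)
qed

lemma scaled_cgeg_Suc_eq_cgeg_sum:
  "of_nat (m + 2) / of_nat (p + q + m + 2) * cgeg (m + 3) p q z = cgeg_sum (Suc m) p q z / fact (m + 1)"
proof -
  have "cgeg (m + 3) p q z = of_nat (p + q + m + 2) / fact (m + 2) * cgeg_sum (Suc m) p q z"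
  proof -
    have idx: "m + 3 = Suc m + 2" "p + q + Suc m + 1 = p + q + m + 2" "Suc m + 1 = m + 2" by simp_all
    show ?thesis using cgeg_eq_cgeg_sum[of "Suc m" p q z] unfolding idx .
  qed
  moreover have "(fact (m + 2) :: complex) = of_nat (m + 2) * fact (m + 1)"
    using fact_Suc[of "m + 1"] by simp
  moreover have "(of_nat (p + q + m + 2) :: complex) \<noteq> 0" "(of_nat (m + 2) :: complex) \<noteq> 0"
    by (simp_all only: of_nat_eq_0_iff)
  ultimately show ?thesis
    by (simp add: field_simps del: of_nat_add fact_Suc)
qed

lemma cgeg_boundary:
  assumes "2 \<le> d" "p = 0 \<or> q = 0"
  shows "cgeg d p q z = of_nat d / of_nat (p + q + d) * cgeg (d + 1) p q z"
proof -
  obtain m where d: "d = m + 2" using assms(1) le_Suc_ex by (metis add.commute)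
  have idx: "m + 2 + 1 = m + 3" "p + q + (m + 2) = p + q + m + 2" by simp_all
  show ?thesis
    unfolding d idx scaled_cgeg_Suc_eq_cgeg_sum cgeg_eq_cgeg_sum
    using cgeg_sum_boundary[OF assms(2), of m z] by simp
qed

lemma cgeg_Suc_Suc:
  assumes "2 \<le> d"
  shows "cgeg d (Suc p) (Suc q) z
           = of_nat d / of_nat (Suc p + Suc q + d) * cgeg (d + 1) (Suc p) (Suc q) z
             - of_nat d / of_nat (p + q + d) * cgeg (d + 1) p q z"
proof -
  obtain m where d: "d = m + 2" using assms le_Suc_ex by (metis add.commute)
  have idx: "m + 2 + 1 = m + 3" "p + q + (m + 2) = p + q + m + 2"
    "Suc p + Suc q + (m + 2) = Suc p + Suc q + m + 2" "Suc p + Suc q + m + 1 = p + q + m + 3"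
    by simp_all
  show ?thesis
    unfolding d idx scaled_cgeg_Suc_eq_cgeg_sum cgeg_eq_cgeg_sum
    by (simp only: times_divide_eq_left cgeg_sum_Suc_Suc diff_divide_distrib)
qed

lemma sum_cgeg_diagonal:
  assumes "2 \<le> d"
  shows "(\<Sum>j = 0..min p q. cgeg d (p - j) (q - j) z)
           = of_nat d / of_nat (p + q + d) * cgeg (d + 1) p q z"
proof (induction p arbitrary: q)
  case 0
  then show ?case using cgeg_boundary[OF assms] by simp
next
  case (Suc p)
  show ?case
  proof (cases q)
    case 0
    then show ?thesis using cgeg_boundary[OF assms] by simp
  next
    case (Suc q')
    have "(\<Sum>j = 0..min (Suc p) q. cgeg d (Suc p - j) (q - j) z)
        = cgeg d (Suc p) (Suc q') z + (\<Sum>j = 0..min p q'. cgeg d (p - j) (q' - j) z)"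
      unfolding Suc min_Suc_Suc sum.atLeast0_atMost_Suc_shift by simp
    then show ?thesis
      using Suc.IH[of q'] cgeg_Suc_Suc[OF assms, of p q' z] Suc by simp
  qed
qed

theorem lemma5p10:
  fixes d p q :: nat and z :: complex
  assumes "d \<ge> 2"
  shows "((\<Sum>j = 0..min p q. cgeg d (p - j) (q - j) z)
           = of_nat d / of_nat (p + q + d) * cgeg (d + 1) p q z)
         \<and> cgegi d (int p) (int q) z
           = of_nat d / of_nat (p + q + d) * cgegi (d + 1) (int p) (int q) z
             - of_nat d / (of_int (int p + int q + int d - 2)) * cgegi (d + 1) (int p - 1) (int q - 1) z"
proof
  show "(\<Sum>j = 0..min p q. cgeg d (p - j) (q - j) z)
           = of_nat d / of_nat (p + q + d) * cgeg (d + 1) p q z"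
    by (rule sum_cgeg_diagonal[OF assms])
  show "cgegi d (int p) (int q) z
           = of_nat d / of_nat (p + q + d) * cgegi (d + 1) (int p) (int q) z
             - of_nat d / (of_int (int p + int q + int d - 2)) * cgegi (d + 1) (int p - 1) (int q - 1) z"
  proof (cases "p = 0 \<or> q = 0")
    case True
    then show ?thesis using cgeg_boundary[OF assms True] by (auto simp: cgegi_def)
  next
    case False
    then obtain p' q' where pq: "p = Suc p'" "q = Suc q'" by (metis not0_implies_Suc)
    have "cgeg d p q z = of_nat d / of_nat (p + q + d) * cgeg (d + 1) p q z
        - of_nat d / of_nat (p' + q' + d) * cgeg (d + 1) p' q' z"
      using cgeg_Suc_Suc[OF assms, of p' q' z] pq by simp
    moreover have "(of_int (int p + int q + int d - 2) :: complex) = of_nat (p' + q' + d)"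
      "int p - 1 = int p'" "int q - 1 = int q'"
      using pq by simp_all
    ultimately show ?thesis
      unfolding cgegi_def by simp
  qed
qed

end
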